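(* Under the setting described in the context, let $m^*=(m_1^*,\dots,m_N^* )\in\prod_{i\in\mathcal N}\mathcal M_i$ be a Nash equilibrium of the game induced by the game form, and let $\hat a^*_i:=\hat a_i(m^* )$ and $\hat t^*_i:=\hat t_i(m^* )$ for $i\in\mathcal N$. Then: (a) (individual rationality) for every $i\in\mathcal N$, $u_i^A\big((\hat a^*_j)_{j\in\mathcal R_i},\hat t^*_i\big)\ \ge\ u_i^A(\mathbf 0,0)$; (b) $\big((\hat a^*_i)_{i\in\mathcal N},(\hat t^*_i)_{i\in\mathcal N}\big)$ is an optimal solution of the centralized problem $(P_C)$.
   Context: Let $N\ge 1$ and $\mathcal N=\{1,\dots,N\}$. For each $i\in\mathcal N$ a set $\mathcal R_i\subseteq\mathcal N$ with $i\in\mathcal R_i$ is given (the users affecting $i$); for $j\in\mathcal N$ put $\mathcal C_j=\{k\in\mathcal N: j\in\mathcal R_k\}$ (the users affected by $j$), and assume $|\mathcal C_j|\ge 3$ for all $j$. Each $\mathcal A_i\subset\mathbb R$ is a nonempty convex compact set with $0\in\mathcal A_i$. For each $i$, $u_i:\mathbb R^{\mathcal R_i}\to\mathbb R\cup\{-\infty\}$ is concave, is real-valued at every $a_{\mathcal R_i}=(a_k)_{k\in\mathcal R_i}$ with $a_i\in\mathcal A_i$, and equals $-\infty$ whenever $a_i\notin\mathcal A_i$. The aggregate utility of $i$ is $u_i^A(a_{\mathcal R_i},t_i)=-t_i+u_i(a_{\mathcal R_i})$ if $a_i\in\mathcal A_i$ and $-\infty$ otherwise ($t_i\in\mathbb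 R$ is a tax). Centralized problem $(P_C)$: maximize $\sum_{i\in\mathcal N}u_i^A(a_{\mathcal R_i},t_i)$ over $(a,t)\in\mathbb R^N\times\mathbb R^N$ subject to $\sum_i t_i=0$; equivalently maximize $\sum_i u_i(a_{\mathcal R_i})$ over the feasible set $\mathcal D=\{(a,t): a_i\in\mathcal A_i\ \forall i,\ \sum_i t_i=0\}$. Game form: user $i$'s message is $m_i=({}^ia_{\mathcal R_i},{}^i\pi_{\mathcal R_i})$ with ${}^ia_{\mathcal R_i}=({}^ia_k)_{k\in\mathcal R_i}\in\mathbb R^{\mathcal R_i}$ and ${}^i\pi_{\mathcal R_i}=({}^i\pi_k)_{k\in\mathcal R_i}\in\mathbb R_+^{\mathcal R_i}$; $\mathcal M_i=\mathbb R^{\mathcal R_i}\times\mathbb R_+^{\mathcal R_i}$. The action outcome is $\hat a_i(m)=\frac1{|\mathcal C_i|}\sum_{k\in\mathcal C_i}{}^ka_i$. For each $j$ fix a bijection $\mathcal I_{\cdot j}:\mathcal C_j\to\{1,\dots,|\mathcal C_j|\}$, write $\mathcal C_{j(k)}$ for the user of $\mathcal C_j$ with index $k$, indices taken cyclically modulo $|\mathcal C_j|$ (so $\mathcal C_{j(|\mathcal C_j|+1)}=\mathcal C_{j(1)}$ etc.). For $i\in\mathcal N$, $j\in\mathcal R_i$ (equivalently $i\in\mathcal C_j$) write $i^+=\mathcal C_{j(\mathcal I_{ij}+1)}$, $i^{++}=\mathcal C_{j(\mathcal I_{ij}+2)}$ (depending on $j$), and define $l_{ij}(m)={}^{i^+}\pi_j-{}^{i^{++}}\pi_j$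 and the tax $\hat t_i(m)=\sum_{j\in\mathcal R_i}\Big[l_{ij}(m)\,\hat a_j(m)+{}^i\pi_j\big({}^ia_j-{}^{i^+}a_j\big)^2-{}^{i^+}\pi_j\big({}^{i^+}a_j-{}^{i^{++}}a_j\big)^2\Big]$. A Nash equilibrium is $m^*\in\prod_i\mathcal M_i$ such that for all $i$ and all $m_i\in\mathcal M_i$, $u_i^A\big((\hat a_j(m^* ))_{j\in\mathcal R_i},\hat t_i(m^* )\big)\ge u_i^A\big((\hat a_j(m_i,m^*_{-i}))_{j\in\mathcal R_i},\hat t_i(m_i,m^*_{-i})\big)$, where $(m_i,m^*_{-i})$ replaces the $i$-th message of $m^*$ by $m_i$. *)

theory Defs
  imports "HOL-Analysis.Analysis" "HOL-Library.FuncSet" "HOL-Library.Extended_Real"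
begin

(* Users are 1..N.  R i is the set of users affecting i. *)

definition affected :: "nat \<Rightarrow> (nat \<Rightarrow> nat set) \<Rightarrow> nat \<Rightarrow> nat set" where
  "affected N R j = {k \<in> {1..N}. j \<in> R k}"

(* A message of user i: (^i a_{R_i}, ^i pi_{R_i}) in R^{R_i} x R_+^{R_i} *)
type_synonym msg = "(nat \<Rightarrow> real) \<times> (nat \<Rightarrow> real)"

definition msg_space :: "(nat \<Rightarrow> nat set) \<Rightarrow> nat \<Rightarrow> msg set" where
  "msg_space R i = (R i \<rightarrow>\<^sub>E (UNIV :: real set)) \<times> (R i \<rightarrow>\<^sub>E {0..})"

definition cyc_user :: "nat \<Rightarrow> (nat \<Rightarrow> nat set) \<Rightarrow> (nat \<Rightarrow> nat \<Rightarrow> nat) \<Rightarrow> nat \<Rightarrow> nat \<Rightarrow> nat" where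
  "cyc_user N R Ix j k =
     the_inv_into (affected N R j) (\<lambda>i. Ix i j) ((k - 1) mod card (affected N R j) + 1)"

definition plus1 :: "nat \<Rightarrow> (nat \<Rightarrow> nat set) \<Rightarrow> (nat \<Rightarrow> nat \<Rightarrow> nat) \<Rightarrow> nat \<Rightarrow> nat \<Rightarrow> nat" where
  "plus1 N R Ix i j = cyc_user N R Ix j (Ix i j + 1)"

definition plus2 :: "nat \<Rightarrow> (nat \<Rightarrow> nat set) \<Rightarrow> (nat \<Rightarrow> nat \<Rightarrow> nat) \<Rightarrow> nat \<Rightarrow> nat \<Rightarrow> nat" where
  "plus2 N R Ix i j = cyc_user N R Ix j (Ix i j + 2)"

definition a_hat :: "nat \<Rightarrow> (nat \<Rightarrow> nat set) \<Rightarrow> (nat \<Rightarrow> msg) \<Rightarrow> nat \<Rightarrow> real" where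
  "a_hat N R m i = (1 / real (card (affected N R i))) * (\<Sum>k\<in>affected N R i. fst (m k) i)"

definition l_price :: "nat \<Rightarrow> (nat \<Rightarrow> nat set) \<Rightarrow> (nat \<Rightarrow> nat \<Rightarrow> nat) \<Rightarrow> (nat \<Rightarrow> msg) \<Rightarrow> nat \<Rightarrow> nat \<Rightarrow> real" where
  "l_price N R Ix m i j = snd (m (plus1 N R Ix i j)) j - snd (m (plus2 N R Ix i j)) j"

definition t_hat :: "nat \<Rightarrow> (nat \<Rightarrow> nat set) \<Rightarrow> (nat \<Rightarrow> nat \<Rightarrow> nat) \<Rightarrow> (nat \<Rightarrow> msg) \<Rightarrow> nat \<Rightarrow> real" where
  "t_hat N R Ix m i =
     (\<Sum>j\<in>R i.
        l_price N R Ix m i j * a_hat N R m j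
        + snd (m i) j * (fst (m i) j - fst (m (plus1 N R Ix i j)) j)\<^sup>2
        - snd (m (plus1 N R Ix i j)) j
            * (fst (m (plus1 N R Ix i j)) j - fst (m (plus2 N R Ix i j)) j)\<^sup>2)"

(* Utility u_i: given as a real function on a_{R_i} (a restricted to R_i), meaningful
   when a_i \<in> A_i; the value -\<infinity> for a_i \<notin> A_i is made explicit below. *)
definition uA :: "(nat \<Rightarrow> nat set) \<Rightarrow> (nat \<Rightarrow> real set) \<Rightarrow> (nat \<Rightarrow> (nat \<Rightarrow> real) \<Rightarrow> real)
                   \<Rightarrow> nat \<Rightarrow> (nat \<Rightarrow> real) \<Rightarrow> real \<Rightarrow> ereal" where
  "uA R A u i a t = (if a i \<in> A i then ereal (- t + u i (restrict a (R i))) else -\<infinity>)"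

(* concavity of the extended function u_i on R^{R_i} (real on {a_i \<in> A_i}, -\<infinity> elsewhere) *)
definition concave_util :: "(nat \<Rightarrow> nat set) \<Rightarrow> (nat \<Rightarrow> real set) \<Rightarrow> (nat \<Rightarrow> (nat \<Rightarrow> real) \<Rightarrow> real) \<Rightarrow> nat \<Rightarrow> bool" where
  "concave_util R A u i \<longleftrightarrow>
     (\<forall>x y (\<theta>::real). x i \<in> A i \<longrightarrow> y i \<in> A i \<longrightarrow> 0 \<le> \<theta> \<longrightarrow> \<theta> \<le> 1 \<longrightarrow>
        \<theta> * u i (restrict x (R i)) + (1 - \<theta>) * u i (restrict y (R i))
          \<le> u i (restrict (\<lambda>k. \<theta> * x k + (1 - \<theta>) * y k) (R i)))"

definition nash_eq :: "nat \<Rightarrow> (nat \<Rightarrow> nat set) \<Rightarrow> (nat \<Rightarrow> nat \<Rightarrow> nat) \<Rightarrow> (nat \<Rightarrow> real set)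
      \<Rightarrow> (nat \<Rightarrow> (nat \<Rightarrow> real) \<Rightarrow> real) \<Rightarrow> (nat \<Rightarrow> msg) \<Rightarrow> bool" where
  "nash_eq N R Ix A u m \<longleftrightarrow>
     m \<in> (\<Pi>\<^sub>E i\<in>{1..N}. msg_space R i) \<and>
     (\<forall>i\<in>{1..N}. \<forall>mi\<in>msg_space R i.
        uA R A u i (a_hat N R (m(i := mi))) (t_hat N R Ix (m(i := mi)) i)
          \<le> uA R A u i (a_hat N R m) (t_hat N R Ix m i))"

definition optimal_PC :: "nat \<Rightarrow> (nat \<Rightarrow> nat set) \<Rightarrow> (nat \<Rightarrow> real set)
      \<Rightarrow> (nat \<Rightarrow> (nat \<Rightarrow> real) \<Rightarrow> real) \<Rightarrow> (nat \<Rightarrow> real) \<Rightarrow> (nat \<Rightarrow> real) \<Rightarrow> bool" where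
  "optimal_PC N R A u a t \<longleftrightarrow>
     (\<forall>i\<in>{1..N}. a i \<in> A i) \<and> (\<Sum>i\<in>{1..N}. t i) = 0 \<and>
     (\<forall>a' t'. (\<Sum>i\<in>{1..N}. t' i) = 0 \<longrightarrow>
        (\<Sum>i\<in>{1..N}. uA R A u i a' (t' i)) \<le> (\<Sum>i\<in>{1..N}. uA R A u i a (t i)))"

end

theory Submission
  imports Defs
begin

(* For every good j, the users of C_j are arranged on a cycle of length
   |C_j| >= 3 by the indexing Ix, and i^+ is the successor of i on this cycle; i^{++}
   is the successor of i^+, and neither i^+ nor i^{++} equals i.

   1. Budget balance.  Writing P(i,j) = ^i pi_j (^i a_j - ^{i^+} a_j)^2, the tax of i
      is  sum_j [l_ij a_j + P(i,j) - P(i^+,j)].  Summing over all users, the penalty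
      terms telescope along each cycle, and so do the prices l_ij = ^{i^+}pi_j -
      ^{i^{++}}pi_j; hence the taxes always sum to zero.
   2. Unilateral deviations.  User i can make the outcome equal to any vector x on
      R_i by a suitable proposal with zero prices; its tax then becomes
      sum_j [l_ij x_j - P(i^+,j)], since l_ij and P(i^+,j) do not depend on m_i.
   3. At a Nash equilibrium this gives individual rationality (deviate to x = 0) and
      the price-taking property  u_i(x) - <l_i,x> <= u_i(a^s) - <l_i,a^s>  for all
      feasible x, where a^s is the equilibrium outcome.  Summing the latter over i,
      the price terms cancel as in step 1, and together with the balanced budget
      this is optimality for (P_C). *)


lemma sum_uA_balanced:
  assumes "finite I" and "(\<Sum>i\<in>I. t i) = 0" and "\<forall>i\<in>I. a i \<in> A i"
  shows "(\<Sum>i\<in>I. uA R A u i a (t i)) = ereal (\<Sum>i\<in>I. u i (restrict a (R i)))"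
proof -
  have "(\<Sum>i\<in>I. uA R A u i a (t i)) = ereal (\<Sum>i\<in>I. - t i + u i (restrict a (R i)))"
    using assms(3) by (simp add: uA_def)
  also have "(\<Sum>i\<in>I. - t i + u i (restrict a (R i))) = (\<Sum>i\<in>I. u i (restrict a (R i)))"
    using assms(2) by (simp add: sum_subtractf)
  finally show ?thesis .
qed

lemma sum_uA_infeasible:
  assumes "finite I" and "i0 \<in> I" and "a i0 \<notin> A i0"
  shows "(\<Sum>i\<in>I. uA R A u i a (t i)) = -\<infinity>"
proof -
  have not_top: "(\<Sum>i\<in>I - {i0}. uA R A u i a (t i)) \<noteq> \<infinity>"
    unfolding sum_Pinfty by (simp add: uA_def)
  have "(\<Sum>i\<in>I. uA R A u i a (t i)) = uA R A u i0 a (t i0) + (\<Sum>i\<in>I - {i0}. uA R A u i a (t i))"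
    using sum.remove[OF assms(1,2)] .
  also have "uA R A u i0 a (t i0) = -\<infinity>"
    using assms(3) by (simp add: uA_def)
  finally show ?thesis using not_top by simp
qed


lemma mod_shift_inj:
  fixes x y d c :: nat
  assumes "x < c" "y < c" "(x + d) mod c = (y + d) mod c"
  shows "x = y"
proof -
  have ordered: "a = b" if "a \<le> b" "b < c" "(a + d) mod c = (b + d) mod c" for a b
  proof -
    have "c dvd (b + d) - (a + d)" using that mod_eq_dvd_iff_nat[of "a + d" "b + d" c] by simp
    then have "c dvd b - a" by simp
    moreover have "b - a < c" using that(2) by linarith
    ultimately show "a = b" using that(1) nat_dvd_not_less[of "b - a" c] by linarith
  qed
  show ?thesis using assms ordered[of x y] ordered[of y x] by linarith
qed

lemma mod_shift_ne:
  fixes x d c :: nat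
  assumes "x < c" "0 < d" "d < c"
  shows "(x + d) mod c \<noteq> x"
proof
  assume "(x + d) mod c = x"
  then have "(x + d) mod c = x mod c" using assms(1) by simp
  then have "c dvd d" using mod_eq_dvd_iff_nat[of x "x + d" c] by simp
  then show False using assms(2,3) nat_dvd_not_less by blast
qed


locale cyclic_game_form =
  fixes N :: nat
    and R :: "nat \<Rightarrow> nat set"
    and Ix :: "nat \<Rightarrow> nat \<Rightarrow> nat"
  assumes R_sub: "\<forall>i\<in>{1..N}. R i \<subseteq> {1..N}"
    and C_card: "\<forall>j\<in>{1..N}. card (affected N R j) \<ge> 3"
    and Ix_bij: "\<forall>j\<in>{1..N}. bij_betw (\<lambda>i. Ix i j) (affected N R j) {1..card (affected N R j)}"
begin

abbreviation C :: "nat \<Rightarrow> nat set" where "C j \<equiv> affected N R j"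
abbreviation c :: "nat \<Rightarrow> nat" where "c j \<equiv> card (affected N R j)"

abbreviation succ :: "nat \<Rightarrow> nat \<Rightarrow> nat" where "succ i j \<equiv> plus1 N R Ix i j"

lemma finite_C: "finite (C j)"
  unfolding affected_def by simp

lemma mem_C: "i \<in> C j \<longleftrightarrow> i \<in> {1..N} \<and> j \<in> R i"
  unfolding affected_def by simp

lemma R_range: "i \<in> {1..N} \<Longrightarrow> j \<in> R i \<Longrightarrow> j \<in> {1..N}"
  using R_sub by blast

lemma user_in_C: "i \<in> {1..N} \<Longrightarrow> j \<in> R i \<Longrightarrow> i \<in> C j"
  by (simp add: mem_C)

lemma index_range: "j \<in> {1..N} \<Longrightarrow> i \<in> C j \<Longrightarrow> Ix i j \<in> {1..c j}"
  using Ix_bij bij_betw_apply by fastforce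

lemma cyc_user_index:
  assumes j: "j \<in> {1..N}"
  shows "cyc_user N R Ix j k \<in> C j \<and> Ix (cyc_user N R Ix j k) j = (k - 1) mod c j + 1"
proof -
  have bij: "bij_betw (\<lambda>i. Ix i j) (C j) {1..c j}" using Ix_bij j by blast
  then have inj: "inj_on (\<lambda>i. Ix i j) (C j)" by (rule bij_betw_imp_inj_on)
  have "c j > 0" using C_card j by fastforce
  then have "(k - 1) mod c j + 1 \<in> (\<lambda>i. Ix i j) ` C j"
    using bij unfolding bij_betw_def by (simp add: Suc_leI)
  then show ?thesis
    unfolding cyc_user_def using the_inv_into_into[OF inj] f_the_inv_into_f[OF inj] by simp
qed

lemma cyc_user_cong:
  "(k - 1) mod c j = (k' - 1) mod c j \<Longrightarrow> cyc_user N R Ix j k = cyc_user N R Ix j k'"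
  unfolding cyc_user_def by simp

lemma cyc_user_shift_ne:
  assumes j: "j \<in> {1..N}" and i: "i \<in> C j" and d: "0 < d" "d < c j"
  shows "cyc_user N R Ix j (Ix i j + d) \<noteq> i"
proof
  assume returns: "cyc_user N R Ix j (Ix i j + d) = i"
  define x where "x = Ix i j - 1"
  have x: "Ix i j = x + 1" "x < c j" using index_range[OF j i] unfolding x_def by auto
  have "(x + d) mod c j + 1 = x + 1"
    using cyc_user_index[OF j, of "Ix i j + d"] returns x by simp
  then show False using mod_shift_ne[OF x(2) d] by simp
qed

lemma succ_index: "j \<in> {1..N} \<Longrightarrow> succ i j \<in> C j \<and> Ix (succ i j) j = Ix i j mod c j + 1"
  using cyc_user_index[of j "Ix i j + 1"] unfolding plus1_def by simp

lemma plus2_eq_succ_succ: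
  assumes j: "j \<in> {1..N}"
  shows "plus2 N R Ix i j = succ (succ i j) j"
proof -
  have "Ix (succ i j) j = Ix i j mod c j + 1" using succ_index[OF j] by blast
  then show ?thesis unfolding plus2_def plus1_def[of _ _ _ "succ i j"]
    by (intro cyc_user_cong) (simp add: mod_Suc_eq)
qed

lemma succ_ne: "j \<in> {1..N} \<Longrightarrow> i \<in> C j \<Longrightarrow> succ i j \<noteq> i"
  using cyc_user_shift_ne[of j i 1] C_card unfolding plus1_def by fastforce

lemma succ_succ_ne: "j \<in> {1..N} \<Longrightarrow> i \<in> C j \<Longrightarrow> succ (succ i j) j \<noteq> i"
  using cyc_user_shift_ne[of j i 2] C_card plus2_eq_succ_succ unfolding plus2_def by fastforce

lemma succ_bij:
  assumes j: "j \<in> {1..N}"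
  shows "bij_betw (\<lambda>i. succ i j) (C j) (C j)"
proof -
  have bij: "bij_betw (\<lambda>i. Ix i j) (C j) {1..c j}" using Ix_bij j by blast
  have "inj_on (\<lambda>i. succ i j) (C j)"
  proof (rule inj_onI)
    fix x y assume x: "x \<in> C j" and y: "y \<in> C j" and eq: "succ x j = succ y j"
    have "Ix x j \<in> {1..c j}" "Ix y j \<in> {1..c j}" using index_range[OF j] x y by blast+
    moreover have "(Ix x j - 1 + 1) mod c j = (Ix y j - 1 + 1) mod c j"
      using calculation eq succ_index[OF j, of x] succ_index[OF j, of y] by simp
    ultimately have "Ix x j - 1 = Ix y j - 1" using mod_shift_inj[of "Ix x j - 1" "c j" "Ix y j - 1" 1] by auto
    then have "Ix x j = Ix y j" using \<open>Ix x j \<in> {1..c j}\<close> \<open>Ix y j \<in> {1..c j}\<close> by arith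
    then show "x = y" using bij x y unfolding bij_betw_def by (auto dest: inj_onD)
  qed
  moreover have "(\<lambda>i. succ i j) ` C j = C j"
    by (rule endo_inj_surj[OF finite_C _ calculation]) (use succ_index[OF j] in auto)
  ultimately show ?thesis unfolding bij_betw_def by simp
qed

lemma sum_succ: "j \<in> {1..N} \<Longrightarrow> (\<Sum>i\<in>C j. f (succ i j)) = (\<Sum>i\<in>C j. f i)"
  using sum.reindex_bij_betw[OF succ_bij] by blast

lemma sum_exchange:
  "(\<Sum>i\<in>{1..N}. \<Sum>j\<in>R i. g i j) = (\<Sum>j\<in>{1..N}. \<Sum>i\<in>C j. (g i j :: real))"
proof -
  have "(\<Sum>i\<in>{1..N}. \<Sum>j\<in>R i. g i j) = (\<Sum>i\<in>{1..N}. \<Sum>j\<in>{j. j \<in> {1..N} \<and> j \<in> R i}. g i j)"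
  proof (rule sum.cong[OF refl])
    fix i assume "i \<in> {1..N}"
    then have "R i = {j. j \<in> {1..N} \<and> j \<in> R i}" using R_range by blast
    then show "(\<Sum>j\<in>R i. g i j) = (\<Sum>j\<in>{j. j \<in> {1..N} \<and> j \<in> R i}. g i j)" by simp
  qed
  also have "\<dots> = (\<Sum>j\<in>{1..N}. \<Sum>i\<in>{i. i \<in> {1..N} \<and> j \<in> R i}. g i j)"
    by (rule sum.swap_restrict) auto
  also have "\<dots> = (\<Sum>j\<in>{1..N}. \<Sum>i\<in>C j. g i j)"
    unfolding affected_def by (simp add: Collect_conj_eq)
  finally show ?thesis .
qed

definition penalty :: "(nat \<Rightarrow> msg) \<Rightarrow> nat \<Rightarrow> nat \<Rightarrow> real" where
  "penalty m i j = snd (m i) j * (fst (m i) j - fst (m (succ i j)) j)\<^sup>2"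

lemma tax_decomp:
  assumes i: "i \<in> {1..N}"
  shows "t_hat N R Ix m i
           = (\<Sum>j\<in>R i. l_price N R Ix m i j * a_hat N R m j + penalty m i j - penalty m (succ i j) j)"
  unfolding t_hat_def penalty_def
  using plus2_eq_succ_succ[OF R_range[OF i]] by (intro sum.cong refl) simp

lemma price_sum_zero:
  assumes j: "j \<in> {1..N}"
  shows "(\<Sum>i\<in>C j. l_price N R Ix m i j) = 0"
proof -
  have "(\<Sum>i\<in>C j. l_price N R Ix m i j)
          = (\<Sum>i\<in>C j. snd (m (succ i j)) j) - (\<Sum>i\<in>C j. snd (m (succ (succ i j) j)) j)"
    unfolding l_price_def plus2_eq_succ_succ[OF j] by (simp add: sum_subtractf)
  also have "(\<Sum>i\<in>C j. snd (m (succ (succ i j) j)) j) = (\<Sum>i\<in>C j. snd (m (succ i j)) j)"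
    by (rule sum_succ[OF j])
  finally show ?thesis by simp
qed

lemma price_payments_cancel:
  "(\<Sum>i\<in>{1..N}. \<Sum>j\<in>R i. l_price N R Ix m i j * y j) = 0"
proof -
  have "(\<Sum>i\<in>{1..N}. \<Sum>j\<in>R i. l_price N R Ix m i j * y j)
          = (\<Sum>j\<in>{1..N}. (\<Sum>i\<in>C j. l_price N R Ix m i j) * y j)"
    unfolding sum_exchange by (simp add: sum_distrib_right)
  also have "\<dots> = 0" by (simp add: price_sum_zero)
  finally show ?thesis .
qed

lemma budget_balance: "(\<Sum>i\<in>{1..N}. t_hat N R Ix m i) = 0"
proof -
  let ?pen = "\<lambda>i j. penalty m i j - penalty m (succ i j) j"
  have "(\<Sum>i\<in>{1..N}. t_hat N R Ix m i)
          = (\<Sum>i\<in>{1..N}. \<Sum>j\<in>R i. l_price N R Ix m i j * a_hat N R m j + ?pen i j)"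
    by (rule sum.cong[OF refl]) (simp add: tax_decomp algebra_simps)
  also have "\<dots> = (\<Sum>i\<in>{1..N}. \<Sum>j\<in>R i. l_price N R Ix m i j * a_hat N R m j)
                    + (\<Sum>i\<in>{1..N}. \<Sum>j\<in>R i. ?pen i j)"
    by (simp add: sum.distrib)
  also have "(\<Sum>i\<in>{1..N}. \<Sum>j\<in>R i. ?pen i j) = (\<Sum>j\<in>{1..N}. \<Sum>i\<in>C j. ?pen i j)"
    by (rule sum_exchange)
  also have "\<dots> = 0"
    using sum_succ[of _ "\<lambda>k. penalty m k _"] by (simp add: sum_subtractf)
  finally show ?thesis using price_payments_cancel[of m "a_hat N R m"] by simp
qed

end


locale nash_equilibrium = cyclic_game_form N R Ix
  for N :: nat and R :: "nat \<Rightarrow> nat set" and Ix :: "nat \<Rightarrow> nat \<Rightarrow> nat" +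
  fixes A :: "nat \<Rightarrow> real set"
    and u :: "nat \<Rightarrow> (nat \<Rightarrow> real) \<Rightarrow> real"
    and m :: "nat \<Rightarrow> msg"
  assumes R_self: "\<forall>i\<in>{1..N}. i \<in> R i"
    and A_zero: "\<forall>i\<in>{1..N}. (0::real) \<in> A i"
    and NE: "nash_eq N R Ix A u m"
begin

abbreviation a_star :: "nat \<Rightarrow> real" where "a_star \<equiv> a_hat N R m"
abbreviation t_star :: "nat \<Rightarrow> real" where "t_star \<equiv> t_hat N R Ix m"
abbreviation l :: "nat \<Rightarrow> nat \<Rightarrow> real" where "l \<equiv> l_price N R Ix m"

lemma penalty_nonneg:
  assumes "i \<in> {1..N}" "j \<in> R i"
  shows "penalty m i j \<ge> 0"
proof -
  have "m i \<in> msg_space R i" using NE assms(1) unfolding nash_eq_def by blast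
  then have "snd (m i) j \<ge> 0" using assms(2) unfolding msg_space_def by auto
  then show ?thesis unfolding penalty_def by simp
qed

lemma succ_penalty_nonneg:
  assumes "i \<in> {1..N}" "j \<in> R i"
  shows "penalty m (succ i j) j \<ge> 0"
proof -
  have "succ i j \<in> C j" using succ_index R_range assms by blast
  then show ?thesis using penalty_nonneg by (simp add: mem_C)
qed

(* The deviation of user i that makes the outcome equal to x on R_i: it shifts its
   proposal for good j by |C_j| (x_j - a*_j) and announces zero prices. *)
definition deviation :: "nat \<Rightarrow> (nat \<Rightarrow> real) \<Rightarrow> msg" where
  "deviation i x = (restrict (\<lambda>j. fst (m i) j + real (c j) * (x j - a_star j)) (R i),
                    restrict (\<lambda>_. 0) (R i))"

lemma deviation_msg: "deviation i x \<in> msg_space R i"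
  unfolding deviation_def msg_space_def by auto

lemma deviation_outcome:
  assumes i: "i \<in> {1..N}" and j: "j \<in> R i"
  shows "a_hat N R (m(i := deviation i x)) j = x j"
proof -
  have jN: "j \<in> {1..N}" using R_range[OF i j] .
  have iC: "i \<in> C j" using user_in_C[OF i j] .
  have c_pos: "real (c j) > 0" using C_card jN by fastforce
  have others: "(\<Sum>k\<in>C j - {i}. fst ((m(i := deviation i x)) k) j) = (\<Sum>k\<in>C j - {i}. fst (m k) j)"
    by (rule sum.cong) auto
  have "(\<Sum>k\<in>C j. fst ((m(i := deviation i x)) k) j)
          = (\<Sum>k\<in>C j. fst (m k) j) + real (c j) * (x j - a_star j)"
    using sum.remove[OF finite_C iC, of "\<lambda>k. fst ((m(i := deviation i x)) k) j"]
      sum.remove[OF finite_C iC, of "\<lambda>k. fst (m k) j"] others j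
    by (simp add: deviation_def)
  also have "(\<Sum>k\<in>C j. fst (m k) j) = real (c j) * a_star j"
    using c_pos by (simp add: a_hat_def)
  finally show ?thesis using c_pos by (simp add: a_hat_def algebra_simps)
qed

(* Neither l_ij nor the successor's penalty depends on m_i, since i^+ and i^{++}
   differ from i; the deviator's own penalty vanishes with its zero prices. *)
lemma deviation_tax:
  assumes i: "i \<in> {1..N}"
  shows "t_hat N R Ix (m(i := deviation i x)) i = (\<Sum>j\<in>R i. l i j * x j - penalty m (succ i j) j)"
  unfolding tax_decomp[OF i]
proof (rule sum.cong[OF refl])
  fix j assume j: "j \<in> R i"
  have jN: "j \<in> {1..N}" using R_range[OF i j] .
  have iC: "i \<in> C j" using user_in_C[OF i j] .
  have ne: "succ i j \<noteq> i" "succ (succ i j) j \<noteq> i"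
    using succ_ne[OF jN iC] succ_succ_ne[OF jN iC] .
  show "l_price N R Ix (m(i := deviation i x)) i j * a_hat N R (m(i := deviation i x)) j
          + penalty (m(i := deviation i x)) i j - penalty (m(i := deviation i x)) (succ i j) j
        = l i j * x j - penalty m (succ i j) j"
    using ne j deviation_outcome[OF i j]
    by (simp add: l_price_def plus2_eq_succ_succ[OF jN] penalty_def deviation_def)
qed

lemma deviation_bound:
  assumes i: "i \<in> {1..N}" and x: "x i \<in> A i"
  shows "a_star i \<in> A i"
    and "u i (restrict x (R i)) - (\<Sum>j\<in>R i. l i j * x j - penalty m (succ i j) j)
           \<le> u i (restrict a_star (R i)) - t_star i"
proof -
  let ?m' = "m(i := deviation i x)"
  have outcome: "restrict (a_hat N R ?m') (R i) = restrict x (R i)"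
    using deviation_outcome[OF i] by (auto simp: restrict_def)
  have own: "a_hat N R ?m' i = x i" using deviation_outcome[OF i] R_self i by blast
  have "uA R A u i (a_hat N R ?m') (t_hat N R Ix ?m' i) \<le> uA R A u i a_star (t_star i)"
    using NE i deviation_msg unfolding nash_eq_def by blast
  then have le: "ereal (u i (restrict x (R i)) - (\<Sum>j\<in>R i. l i j * x j - penalty m (succ i j) j))
                   \<le> uA R A u i a_star (t_star i)"
    using x by (simp add: uA_def outcome own deviation_tax[OF i])
  then show feasible: "a_star i \<in> A i"
    by (auto simp: uA_def split: if_splits)
  show "u i (restrict x (R i)) - (\<Sum>j\<in>R i. l i j * x j - penalty m (succ i j) j)
          \<le> u i (restrict a_star (R i)) - t_star i"
    using le feasible by (simp add: uA_def)
qed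

lemma equilibrium_feasible: "i \<in> {1..N} \<Longrightarrow> a_star i \<in> A i"
  using deviation_bound(1)[of i "\<lambda>_. 0"] A_zero by simp

lemma individual_rationality:
  assumes i: "i \<in> {1..N}"
  shows "uA R A u i a_star (t_star i) \<ge> uA R A u i (\<lambda>_. 0) 0"
proof -
  have "(\<Sum>j\<in>R i. penalty m (succ i j) j) \<ge> 0"
    using succ_penalty_nonneg[OF i] by (simp add: sum_nonneg)
  moreover have "u i (restrict (\<lambda>_. 0) (R i)) + (\<Sum>j\<in>R i. penalty m (succ i j) j)
                   \<le> u i (restrict a_star (R i)) - t_star i"
    using deviation_bound(2)[OF i, of "\<lambda>_. 0"] A_zero i by (simp add: sum_negf)
  ultimately show ?thesis
    using equilibrium_feasible[OF i] A_zero i by (simp add: uA_def)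
qed

(* At equilibrium every user acts as a price taker facing the prices l_ij: a* maximizes
   u_i(x) - sum_j l_ij x_j over feasible x.  Own penalties are dropped as nonnegative. *)
lemma price_taking:
  assumes i: "i \<in> {1..N}" and x: "x i \<in> A i"
  shows "u i (restrict x (R i)) - (\<Sum>j\<in>R i. l i j * x j)
           \<le> u i (restrict a_star (R i)) - (\<Sum>j\<in>R i. l i j * a_star j)"
proof -
  have "(\<Sum>j\<in>R i. penalty m i j) \<ge> 0"
    using penalty_nonneg[OF i] by (simp add: sum_nonneg)
  then show ?thesis
    using deviation_bound(2)[of i x] i x unfolding tax_decomp[OF i]
    by (simp add: sum.distrib sum_subtractf)
qed

lemma welfare_optimal: "optimal_PC N R A u a_star t_star"
  unfolding optimal_PC_def
proof (intro conjI allI impI)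
  show feasible: "\<forall>i\<in>{1..N}. a_star i \<in> A i" using equilibrium_feasible by blast
  show balanced: "(\<Sum>i\<in>{1..N}. t_star i) = 0" by (rule budget_balance)
  fix a' t' :: "nat \<Rightarrow> real" assume t': "(\<Sum>i\<in>{1..N}. t' i) = 0"
  show "(\<Sum>i\<in>{1..N}. uA R A u i a' (t' i)) \<le> (\<Sum>i\<in>{1..N}. uA R A u i a_star (t_star i))"
  proof (cases "\<forall>i\<in>{1..N}. a' i \<in> A i")
    case True
    have "(\<Sum>i\<in>{1..N}. u i (restrict a' (R i)) - (\<Sum>j\<in>R i. l i j * a' j))
            \<le> (\<Sum>i\<in>{1..N}. u i (restrict a_star (R i)) - (\<Sum>j\<in>R i. l i j * a_star j))"
      using price_taking True by (intro sum_mono) blast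
    then have "(\<Sum>i\<in>{1..N}. u i (restrict a' (R i))) \<le> (\<Sum>i\<in>{1..N}. u i (restrict a_star (R i)))"
      using price_payments_cancel[of m a'] price_payments_cancel[of m a_star]
      by (simp add: sum_subtractf)
    then show ?thesis
      using sum_uA_balanced[OF _ t' True] sum_uA_balanced[OF _ balanced feasible] by simp
  next
    case False
    then show ?thesis using sum_uA_infeasible[of "{1..N}"] by fastforce
  qed
qed

end

theorem theorem1:
  fixes N :: nat
    and R :: "nat \<Rightarrow> nat set"
    and A :: "nat \<Rightarrow> real set"
    and u :: "nat \<Rightarrow> (nat \<Rightarrow> real) \<Rightarrow> real"
    and Ix :: "nat \<Rightarrow> nat \<Rightarrow> nat"
    and m :: "nat \<Rightarrow> msg"
  assumes N_pos: "N \<ge> 1"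
    and R_sub: "\<forall>i\<in>{1..N}. R i \<subseteq> {1..N}"
    and R_self: "\<forall>i\<in>{1..N}. i \<in> R i"
    and C_card: "\<forall>j\<in>{1..N}. card (affected N R j) \<ge> 3"
    and A_convex: "\<forall>i\<in>{1..N}. convex (A i)"
    and A_compact: "\<forall>i\<in>{1..N}. compact (A i)"
    and A_zero: "\<forall>i\<in>{1..N}. (0::real) \<in> A i"
    and u_concave: "\<forall>i\<in>{1..N}. concave_util R A u i"
    and Ix_bij: "\<forall>j\<in>{1..N}. bij_betw (\<lambda>i. Ix i j) (affected N R j) {1..card (affected N R j)}"
    and NE: "nash_eq N R Ix A u m"
  shows "(\<forall>i\<in>{1..N}. uA R A u i (a_hat N R m) (t_hat N R Ix m i) \<ge> uA R A u i (\<lambda>_. 0) 0)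
         \<and> optimal_PC N R A u (a_hat N R m) (t_hat N R Ix m)"
proof -
  (* Only the structural hypotheses enter. *)
  interpret nash_equilibrium N R Ix A u m
    using R_sub C_card Ix_bij R_self A_zero NE by unfold_locales
  show ?thesis using individual_rationality welfare_optimal by blast
qed

end
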